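(* Let $\alpha\in(0,1/2)$ and $q_1,q_3\in(0,1)$ satisfy $\frac{4\alpha+1}{1-q_3}+\frac{3-4\alpha}{1-q_1}<\frac{8(4\alpha+3)}{3}$ together with either (1) $\alpha>1/4$ and $(12\alpha+3)q_3+(3-4\alpha)q_1>8\alpha+3$, or (2) $\alpha\le 1/4$ and $6q_3+2q_1>5$. Then the $q_3$-elasticity of $q_1$, defined as $-\dfrac{(q_1-1/4)/(1/4)}{(q_3-3/4)/(3/4)}$, is greater than $9$.
   Context: Here $1/4$ and $3/4$ are the status quo recommendation qualities of the low and high user segments, and $q_1,q_3$ the treatment's qualities of those segments. *)

theory Defs
  imports Complex_Main
begin

text \<open>The q3-elasticity of q1 relative to the status quo qualities 1/4 (low) and 3/4 (high).\<close>
definition elasticity :: "real \<Rightarrow> real \<Rightarrow> real" where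
  "elasticity q1 q3 = - (((q1 - 1/4) / (1/4)) / ((q3 - 3/4) / (3/4)))"

end

theory Submission
  imports Defs
begin

text \<open>Write \<open>u = 1 - q3\<close> and \<open>v = 1 - q1\<close> for the distances of the treatment qualities
  from \<open>1\<close>; the status quo is \<open>(u, v) = (1/4, 3/4)\<close>. Replacing \<open>1/u\<close> and \<open>1/v\<close> by their
  tangent lines at the status quo turns the budget hypothesis into the strict linear inequality
  \<open>9(4\<alpha>+1) u + (3-4\<alpha>) v > 3(4\<alpha>+3)/2\<close>, whose boundary line passes through the status quo.
  Each of the two alternative hypotheses is a half-plane whose boundary also passes through the
  status quo, with a different slope; intersecting gives \<open>u > 1/4\<close>, i.e. \<open>q3 < 3/4\<close>, and
  \<open>3u + v < 3/2\<close>, i.e. \<open>q1 - 1/4 > 3 (3/4 - q3)\<close>, which says that the elasticity exceeds \<open>9\<close>.\<close>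

lemma inverse_ge_tangent_line:
  fixes x c :: real
  assumes "0 < x" and "0 < c"
  shows "2/c - x/c^2 \<le> 1/x"
proof -
  have "0 \<le> (x - c)^2 / (x * c^2)"
    using assms by simp
  also have "(x - c)^2 / (x * c^2) = 1/x - (2/c - x/c^2)"
    using assms by (simp add: field_simps power2_eq_square)
  finally show ?thesis by simp
qed

lemma budget_beyond_tangent:
  fixes \<alpha> u v :: real
  assumes "-1/4 \<le> \<alpha>" and "\<alpha> \<le> 3/4" and "0 < u" and "0 < v"
    and budget: "(4*\<alpha> + 1) / u + (3 - 4*\<alpha>) / v < 8 * (4*\<alpha> + 3) / 3"
  shows "9 * (4*\<alpha> + 1) * u + (3 - 4*\<alpha>) * v > 3/2 * (4*\<alpha> + 3)"
proof -
  have "(4*\<alpha> + 1) * (8 - 16*u) \<le> (4*\<alpha> + 1) * (1/u)"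
    using inverse_ge_tangent_line[of u "1/4"] assms(1,3)
    by (intro mult_left_mono) (simp_all add: power2_eq_square)
  moreover have "(3 - 4*\<alpha>) * (8/3 - 16*v/9) \<le> (3 - 4*\<alpha>) * (1/v)"
    using inverse_ge_tangent_line[of v "3/4"] assms(2,4)
    by (intro mult_left_mono) (simp_all add: power2_eq_square)
  ultimately have "(4*\<alpha> + 1) * (8 - 16*u) + (3 - 4*\<alpha>) * (8/3 - 16*v/9) < 8 * (4*\<alpha> + 3) / 3"
    using budget unfolding times_divide_eq_right mult_1_right by linarith
  then show ?thesis
    by (simp add: field_simps)
qed

lemma quarter_less_of_sum_bound:
  fixes \<alpha> u v :: real
  assumes "0 < \<alpha>" and "\<alpha> < 3/4"
    and tangent: "9 * (4*\<alpha> + 1) * u + (3 - 4*\<alpha>) * v > 3/2 * (4*\<alpha> + 3)"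
    and "3*u + v < 3/2"
  shows "1/4 < u"
proof -
  have "(3 - 4*\<alpha>) * (3*u + v) < (3 - 4*\<alpha>) * (3/2)"
    using assms(2,4) by (intro mult_strict_left_mono) auto
  with tangent have "\<alpha> * (1/4) < \<alpha> * u"
    by (simp add: algebra_simps)
  then show ?thesis
    using assms(1) by simp
qed

lemma quarter_less_and_sum_bound_of_line_bound:
  fixes \<alpha> u v :: real
  assumes "1/4 < \<alpha>" and "\<alpha> < 3/4"
    and tangent: "9 * (4*\<alpha> + 1) * u + (3 - 4*\<alpha>) * v > 3/2 * (4*\<alpha> + 3)"
    and line: "3 * (4*\<alpha> + 1) * u + (3 - 4*\<alpha>) * v < 3"
  shows "1/4 < u" and "3*u + v < 3/2"
proof -
  from tangent line have "(4*\<alpha> + 1) * (1/4) < (4*\<alpha> + 1) * u"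
    by (simp add: algebra_simps)
  then show u: "1/4 < u"
    using assms(1) by simp
  have "(24*\<alpha> - 6) * (1/4) < (24*\<alpha> - 6) * u"
    using u assms(1) by (intro mult_strict_left_mono) auto
  with line have "(3 - 4*\<alpha>) * (3*u + v) < (3 - 4*\<alpha>) * (3/2)"
    by (simp add: algebra_simps)
  then show "3*u + v < 3/2"
    by (rule mult_left_less_imp_less) (use assms(2) in simp)
qed

lemma elasticity_gt_nine:
  fixes q1 q3 :: real
  assumes "q3 < 3/4" and "q1 + 3*q3 > 5/2"
  shows "elasticity q1 q3 > 9"
proof -
  have "elasticity q1 q3 = 3 * (q1 - 1/4) / (3/4 - q3)"
    unfolding elasticity_def using assms(1) by (simp add: field_simps)
  also have "\<dots> > 9"
    using assms by (simp add: field_simps)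
  finally show ?thesis .
qed

theorem corollaryA1:
  fixes \<alpha> q1 q3 :: real
  assumes "0 < \<alpha>" and "\<alpha> < 1/2"
    and "0 < q1" and "q1 < 1" and "0 < q3" and "q3 < 1"
    and "(4*\<alpha> + 1) / (1 - q3) + (3 - 4*\<alpha>) / (1 - q1) < 8 * (4*\<alpha> + 3) / 3"
    and "(\<alpha> > 1/4 \<and> (12*\<alpha> + 3) * q3 + (3 - 4*\<alpha>) * q1 > 8*\<alpha> + 3)
         \<or> (\<alpha> \<le> 1/4 \<and> 6*q3 + 2*q1 > 5)"
  shows "elasticity q1 q3 > 9"
proof -
  have tangent: "9 * (4*\<alpha> + 1) * (1 - q3) + (3 - 4*\<alpha>) * (1 - q1) > 3/2 * (4*\<alpha> + 3)"
    using budget_beyond_tangent[of \<alpha> "1 - q3" "1 - q1"] assms(1-7) by simp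
  have "1/4 < 1 - q3 \<and> 3 * (1 - q3) + (1 - q1) < 3/2"
    using assms(8)
  proof
    assume "1/4 < \<alpha> \<and> (12*\<alpha> + 3) * q3 + (3 - 4*\<alpha>) * q1 > 8*\<alpha> + 3"
    then show ?thesis
      using quarter_less_and_sum_bound_of_line_bound[OF _ _ tangent] assms(2)
      by (simp add: algebra_simps)
  next
    assume "\<alpha> \<le> 1/4 \<and> 6*q3 + 2*q1 > 5"
    then show ?thesis
      using quarter_less_of_sum_bound[OF assms(1) _ tangent] assms(2) by simp
  qed
  then show ?thesis
    by (intro elasticity_gt_nine) auto
qed

end
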